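(* (i) Suppose the first Piola–Kirchhoff stress of a Cauchy elastic solid is given by $P^{aA}=g^{ab}\sum_{i=1}^3\phi_i\,\partial\psi_i/\partial F^b{}_A$ with scalar functions $\phi_i,\psi_i$ of $(X,\mathbf F,\mathbf G,\mathbf g)$ (some of which may be identically zero or constant). If the response is objective, i.e. all $\phi_i$ and $\psi_i$ depend on $\mathbf F$ only through $\mathbf C^\flat=\mathbf F^\star\mathbf g\mathbf F$, then the balance of angular momentum $P^{aA}F^b{}_A=P^{bA}F^a{}_A$ holds for every $\mathbf F$. (ii) The converse fails: there exist Cauchy elastic response functions (e.g. Ericksen solids $P^{aA}=g^{ab}\phi_1(\mathbf F,\mathbf G,\mathbf g)\partial\psi_1/\partial F^b{}_A$ with $\psi_1$ a function of $(\mathbf C^\flat,\mathbf G)$ and $\phi_1$ a nonvanishing function of $\mathbf F$ that is not invariant under $\mathbf F\mapsto\mathbf Q\mathbf F$ for $\mathbf g$-orthogonal $\mathbf Q$) that satisfy the balance of angular momentum for every $\mathbf F$ but are not objective, i.e. $\hat{\mathbf P}(\mathbf Q\mathbf F)\neq\mathbf Q\hat{\mathbf P}(\mathbf F)$ for some $\mathbf g$-orthogonal $\mathbf Q$.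
   Context: Setting: a body $(\mathcal B,\mathbf G)$ deforming in Euclidean space $(\mathcal S,\mathbf g)$ with deformation gradient $\mathbf F$ (components $F^a{}_A$), dual $\mathbf F^\star$, right Cauchy–Green tensor $\mathbf C^\flat=\mathbf F^\star\mathbf g\mathbf F$. A Cauchy elastic solid has constitutive law $\mathbf P=\hat{\mathbf P}(X,\mathbf F,\mathbf G,\mathbf g)$ for the first Piola–Kirchhoff stress, with no energy function assumed. Objectivity means $\hat{\mathbf P}(X,\mathbf Q\mathbf F,\mathbf G,\mathbf g)=\mathbf Q\hat{\mathbf P}(X,\mathbf F,\mathbf G,\mathbf g)$ for all $\mathbf g$-orthogonal $\mathbf Q$. Balance of angular momentum means $\mathbf P\mathbf F^\star=\mathbf F\mathbf P^\star$, i.e. $P^{aA}F^b{}_A=P^{bA}F^a{}_A$. *)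

theory Defs
  imports "HOL-Analysis.Analysis"
begin

text \<open>Tensors in 3D are represented by their component matrices in real^3^3.
  F $ a $ A = F^a_A, g $ a $ b = g_ab, P $ a $ A = P^{aA}.
  Inverse metric components g^ab are matrix_inv g.\<close>

type_synonym mat3 = "real^3^3"

definition metric :: "mat3 \<Rightarrow> bool" where
  "metric g \<longleftrightarrow> transpose g = g \<and> (\<forall>v::real^3. v \<noteq> 0 \<longrightarrow> v \<bullet> (g *v v) > 0)"

definition g_orthogonal :: "mat3 \<Rightarrow> mat3 \<Rightarrow> bool" where
  "g_orthogonal g Q \<longleftrightarrow> transpose Q ** g ** Q = g"

definition rightCG :: "mat3 \<Rightarrow> mat3 \<Rightarrow> mat3" where
  "rightCG g F = transpose F ** g ** F"

definition dF :: "(mat3 \<Rightarrow> real) \<Rightarrow> mat3 \<Rightarrow> 3 \<Rightarrow> 3 \<Rightarrow> real" where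
  "dF f F b A = frechet_derivative f (at F) (axis b (axis A 1))"

definition stressP :: "mat3 \<Rightarrow> (nat \<Rightarrow> mat3 \<Rightarrow> real) \<Rightarrow> (nat \<Rightarrow> mat3 \<Rightarrow> real) \<Rightarrow> mat3 \<Rightarrow> mat3" where
  "stressP g \<phi> \<psi> F = (\<chi> a A. \<Sum>b\<in>UNIV. (matrix_inv g) $ a $ b *
      (\<Sum>i\<in>{1..3}. \<phi> i F * dF (\<psi> i) F b A))"

definition responseP ::
  "(nat \<Rightarrow> 'x \<Rightarrow> mat3 \<Rightarrow> mat3 \<Rightarrow> mat3 \<Rightarrow> real) \<Rightarrow> (nat \<Rightarrow> 'x \<Rightarrow> mat3 \<Rightarrow> mat3 \<Rightarrow> mat3 \<Rightarrow> real)
    \<Rightarrow> 'x \<Rightarrow> mat3 \<Rightarrow> mat3 \<Rightarrow> mat3 \<Rightarrow> mat3" where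
  "responseP \<phi> \<psi> X F G g = stressP g (\<lambda>i F'. \<phi> i X F' G g) (\<lambda>i F'. \<psi> i X F' G g) F"

definition angmom :: "mat3 \<Rightarrow> mat3 \<Rightarrow> bool" where
  "angmom P F \<longleftrightarrow> (\<forall>a b. (\<Sum>A\<in>UNIV. P $ a $ A * F $ b $ A) = (\<Sum>A\<in>UNIV. P $ b $ A * F $ a $ A))"

definition objective :: "('x \<Rightarrow> mat3 \<Rightarrow> mat3 \<Rightarrow> mat3 \<Rightarrow> mat3) \<Rightarrow> bool" where
  "objective Ph \<longleftrightarrow> (\<forall>X F G g Q. metric G \<and> metric g \<and> g_orthogonal g Q \<longrightarrow>
      Ph X (Q ** F) G g = Q ** Ph X F G g)"

end

theory Submission
  imports Defs
begin

text \<open>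
  If a scalar function f of F satisfies f(Q F) = f(F) for all g-orthogonal Q, differentiating
  along a curve Q(t) of g-orthogonal matrices with Q(0) = 1 and Q'(0) = A gives Df(F)[A F] = 0.
  The tangent vectors A = g^-1 W, with W = e_p e_q^T - e_q e_p^T skew, turn this into the
  symmetry of g^-1 (df/dF) F^T, and P F^T is a linear combination of such matrices when the
  \<psi>_i depend on F only through C.  The curves come from Rodrigues' formula, since
  A^3 = -\<sigma> A for these A.  For the converse, P = exp(F_11) dC_11/dF balances angular momentum
  by the first part, but the reflection Q = -1 does not preserve the factor exp(F_11).
\<close>

lemma matrix_add_rdistrib: "((A::'a::semiring_1^'n^'m) + B) ** C = A ** C + B ** C"
  by (simp add: matrix_matrix_mult_def vec_eq_iff sum.distrib distrib_right)

lemma matrix_diff_ldistrib: "(C::'a::ring_1^'n^'m) ** (A - B) = C ** A - C ** B"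
  by (simp add: matrix_matrix_mult_def vec_eq_iff sum_subtractf right_diff_distrib)

lemma matrix_diff_rdistrib: "((A::'a::ring_1^'n^'m) - B) ** C = A ** C - B ** C"
  by (simp add: matrix_matrix_mult_def vec_eq_iff sum_subtractf left_diff_distrib)

lemma matrix_mul_minus_left: "(- (A::'a::ring_1^'n^'m)) ** B = - (A ** B)"
  by (simp add: matrix_matrix_mult_def vec_eq_iff sum_negf)

lemma matrix_mul_minus_right: "(A::'a::ring_1^'n^'m) ** (- B) = - (A ** B)"
  by (simp add: matrix_matrix_mult_def vec_eq_iff sum_negf)

lemma transpose_add: "transpose (A + B) = transpose A + transpose (B::'a::semiring_1^'n^'m)"
  by (simp add: transpose_def vec_eq_iff)

lemma transpose_minus: "transpose (- A) = - transpose (A::'a::ring_1^'n^'m)"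
  by (simp add: transpose_def vec_eq_iff)

lemma linear_transpose: "linear (transpose :: real^'n^'m \<Rightarrow> real^'m^'n)"
  by (rule linearI) (simp_all add: transpose_add transpose_scalar)

lemma bounded_linear_matrix_mul_left: "bounded_linear (\<lambda>X::real^'n^'m. X ** C)"
  by (simp add: linear_conv_bounded_linear[symmetric] linearI matrix_add_rdistrib scalar_matrix_assoc)

lemma matrix_inv_invertible:
  fixes A :: "'a::semiring_1^'n^'m"
  assumes "invertible A"
  shows "A ** matrix_inv A = mat 1" "matrix_inv A ** A = mat 1"
  using someI_ex[OF assms[unfolded invertible_def]] by (simp_all add: matrix_inv_def)

lemma transpose_matrix_inv_symmetric:
  fixes A :: "'a::comm_semiring_1^'n^'n"
  assumes "invertible A" "transpose A = A"
  shows "transpose (matrix_inv A) = matrix_inv A"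
proof -
  have "transpose (matrix_inv A) ** A = mat 1"
    using matrix_inv_invertible(1)[OF assms(1)] assms(2) by (metis matrix_transpose_mul transpose_mat)
  then show ?thesis
    by (metis matrix_inv_invertible(1)[OF assms(1)] matrix_mul_assoc matrix_mul_lid matrix_mul_rid)
qed

definition skew_unit :: "'n::finite \<Rightarrow> 'n \<Rightarrow> real^'n^'n" where
  "skew_unit p q = (\<chi> i j. (if i = p \<and> j = q then 1 else 0) - (if i = q \<and> j = p then 1 else 0))"

lemma skew_unit_nth:
  "skew_unit p q $ i $ j = (if i = p \<and> j = q then 1 else 0) - (if i = q \<and> j = p then 1 else 0)"
  by (simp add: skew_unit_def)

lemma transpose_skew_unit: "transpose (skew_unit p q) = - skew_unit p q"
proof -
  have "transpose (skew_unit p q) $ i $ j = (- skew_unit p q) $ i $ j" for i j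
    unfolding transpose_def vec_lambda_beta skew_unit_nth vector_uminus_component
    by (cases "i = p"; cases "j = q"; cases "i = q"; cases "j = p"; simp)
  then show ?thesis by (simp add: vec_eq_iff)
qed

lemma matrix_mul_skew_unit_nth:
  "(M ** skew_unit p q) $ i $ j = (if j = q then M$i$p else 0) - (if j = p then M$i$q else 0)"
proof -
  have "(M ** skew_unit p q) $ i $ j =
      (\<Sum>k\<in>UNIV. if k = p then (if j = q then M$i$k else 0) else 0) -
      (\<Sum>k\<in>UNIV. if k = q then (if j = p then M$i$k else 0) else 0)"
    unfolding matrix_matrix_mult_def skew_unit_nth vec_lambda_beta sum_subtractf[symmetric]
    by (rule sum.cong) auto
  then show ?thesis by simp
qed

lemma matrix_mul_skew_unit_mul_nth:
  "(M ** skew_unit p q ** N) $ i $ k = M$i$p * N$q$k - M$i$q * N$p$k"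
proof -
  have "(M ** skew_unit p q ** N) $ i $ k =
      (\<Sum>j\<in>UNIV. if j = q then M$i$p * N$j$k else 0) - (\<Sum>j\<in>UNIV. if j = p then M$i$q * N$j$k else 0)"
    unfolding matrix_matrix_mult_def[of "M ** skew_unit p q"] matrix_mul_skew_unit_nth
      vec_lambda_beta sum_subtractf[symmetric]
    by (rule sum.cong) auto
  then show ?thesis by simp
qed

lemma symmetric_mul_skew_unit_cube:
  assumes "transpose h = h"
  shows "(h ** skew_unit p q) ** (h ** skew_unit p q) ** (h ** skew_unit p q) =
    - (h$p$p * h$q$q - h$p$q * h$p$q) *\<^sub>R (h ** skew_unit p q)"
proof -
  have "h$q$p = h$p$q"
    using assms by (metis transpose_def vec_lambda_beta)
  then have "(h ** skew_unit p q ** h ** skew_unit p q ** h ** skew_unit p q) $ i $ j =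
      (- (h$p$p * h$q$q - h$p$q * h$p$q) *\<^sub>R (h ** skew_unit p q)) $ i $ j" for i j
    unfolding matrix_mul_skew_unit_mul_nth matrix_mul_skew_unit_nth vector_scaleR_component
    by (cases "j = q"; cases "j = p"; simp add: algebra_simps)
  then show ?thesis
    by (simp add: vec_eq_iff matrix_mul_assoc)
qed

lemma transpose_symmetric_mul_skew_unit:
  assumes "g ** h = mat 1" "h ** g = mat 1" "transpose h = h"
  shows "transpose (h ** skew_unit p q) ** g = - (g ** (h ** skew_unit p q))"
proof -
  have "transpose (h ** skew_unit p q) ** g = - skew_unit p q ** (h ** g)"
    by (simp add: matrix_transpose_mul transpose_skew_unit assms(3) matrix_mul_assoc)
  also have "\<dots> = - (g ** (h ** skew_unit p q))"
    by (simp add: assms(1,2) matrix_mul_assoc matrix_mul_minus_left)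
  finally show ?thesis .
qed

section \<open>Rodrigues curves in the g-orthogonal group\<close>

definition rodrigues :: "real^'n^'n \<Rightarrow> real \<Rightarrow> real \<Rightarrow> real^'n^'n" where
  "rodrigues A s k = mat 1 + s *\<^sub>R A + k *\<^sub>R (A ** A)"

lemma rodrigues_minus_mult:
  assumes "A ** A ** A = - \<sigma> *\<^sub>R A"
  shows "rodrigues A (- s) k ** rodrigues A s k = mat 1 + (2 * k - s * s - \<sigma> * k * k) *\<^sub>R (A ** A)"
proof -
  have "A ** A ** A ** A = - \<sigma> *\<^sub>R (A ** A)"
    using assms by (simp add: scalar_matrix_assoc[symmetric] matrix_mul_minus_left)
  with assms show ?thesis
    unfolding rodrigues_def
    by (simp add: matrix_add_ldistrib matrix_add_rdistrib matrix_diff_ldistrib matrix_diff_rdistrib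
        matrix_mul_minus_left matrix_mul_minus_right matrix_scalar_ac scalar_matrix_assoc[symmetric]
        matrix_mul_assoc algebra_simps)
      (simp add: vec_eq_iff)
qed

lemma transpose_rodrigues_mul:
  assumes "transpose A ** g = - (g ** A)"
  shows "transpose (rodrigues A s k) ** g = g ** rodrigues A (- s) k"
proof -
  have "transpose A ** transpose A ** g = g ** A ** A"
    using assms by (metis matrix_mul_assoc matrix_mul_minus_left matrix_mul_minus_right minus_minus)
  with assms show ?thesis
    unfolding rodrigues_def
    by (simp add: transpose_add transpose_scalar matrix_transpose_mul matrix_add_ldistrib
        matrix_add_rdistrib matrix_diff_ldistrib matrix_mul_minus_left matrix_mul_minus_right
        matrix_scalar_ac scalar_matrix_assoc[symmetric] matrix_mul_assoc)
qed

lemma rodrigues_orthogonal: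
  assumes "A ** A ** A = - \<sigma> *\<^sub>R A" "transpose A ** g = - (g ** A)"
    and "2 * k - s * s - \<sigma> * k * k = 0"
  shows "transpose (rodrigues A s k) ** g ** rodrigues A s k = g"
proof -
  have "transpose (rodrigues A s k) ** g ** rodrigues A s k = g ** (rodrigues A (- s) k ** rodrigues A s k)"
    by (simp add: transpose_rodrigues_mul[OF assms(2)] matrix_mul_assoc)
  then show ?thesis
    by (simp add: rodrigues_minus_mult[OF assms(1)] assms(3))
qed

text \<open>
  For \<sigma> = \<omega>^2 > 0 this is the rotation by the angle \<theta> with tan(\<theta>/2) = \<omega> t/2, i.e.
  s = sin \<theta> / \<omega> and k = (1 - cos \<theta>) / \<omega>^2; the rational form needs no case split on \<sigma>.
\<close>

definition rodrigues_curve :: "real^'n^'n \<Rightarrow> real \<Rightarrow> real \<Rightarrow> real^'n^'n" where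
  "rodrigues_curve A \<sigma> t =
    rodrigues A (t / (1 + \<sigma> * t * t / 4)) (t * t / 2 / (1 + \<sigma> * t * t / 4))"

lemma rodrigues_curve_parameters:
  fixes \<sigma> t :: real
  defines "d \<equiv> 1 + \<sigma> * t * t / 4"
  shows "2 * (t * t / 2 / d) - t / d * (t / d) - \<sigma> * (t * t / 2 / d) * (t * t / 2 / d) = 0"
proof (cases "d = 0")
  case False
  then show ?thesis
    by (simp add: divide_simps) (simp add: d_def algebra_simps)
qed simp

lemma rodrigues_curve_orthogonal:
  assumes "A ** A ** A = - \<sigma> *\<^sub>R A" "transpose A ** g = - (g ** A)"
  shows "transpose (rodrigues_curve A \<sigma> t) ** g ** rodrigues_curve A \<sigma> t = g"
  unfolding rodrigues_curve_def by (rule rodrigues_orthogonal[OF assms rodrigues_curve_parameters])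

lemma rodrigues_curve_0 [simp]: "rodrigues_curve A \<sigma> 0 = mat 1"
  by (simp add: rodrigues_curve_def rodrigues_def)

lemma rodrigues_curve_has_derivative: "(rodrigues_curve A \<sigma> has_vector_derivative A) (at 0)"
proof -
  define s where "s t = t / (1 + \<sigma> * t * t / 4)" for t :: real
  define k where "k t = t * t / 2 / (1 + \<sigma> * t * t / 4)" for t :: real
  have "(s has_real_derivative 1) (at 0)"
    unfolding s_def[abs_def] by (auto intro!: derivative_eq_intros)
  moreover have "(k has_real_derivative 0) (at 0)"
    unfolding k_def[abs_def] by (auto intro!: derivative_eq_intros)
  ultimately have "((\<lambda>t. mat 1 + s t *\<^sub>R A + k t *\<^sub>R (A ** A)) has_vector_derivative
      (0 + (s 0 *\<^sub>R 0 + 1 *\<^sub>R A) + (k 0 *\<^sub>R 0 + 0 *\<^sub>R (A ** A)))) (at 0)"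
    by (intro has_vector_derivative_add has_vector_derivative_scaleR has_vector_derivative_const)
  moreover have "rodrigues_curve A \<sigma> = (\<lambda>t. mat 1 + s t *\<^sub>R A + k t *\<^sub>R (A ** A))"
    by (simp add: fun_eq_iff rodrigues_curve_def rodrigues_def s_def k_def)
  ultimately show ?thesis
    by simp
qed

section \<open>Derivatives of functions invariant under g-orthogonal matrices\<close>

lemma frechet_derivative_orthogonal_invariant:
  fixes f :: "real^'m^'n \<Rightarrow> 'b::real_normed_vector"
  assumes "f differentiable (at F)"
    and invariant: "\<And>Q. transpose Q ** g ** Q = g \<Longrightarrow> f (Q ** F) = f F"
    and "A ** A ** A = - \<sigma> *\<^sub>R A" "transpose A ** g = - (g ** A)"
  shows "frechet_derivative f (at F) (A ** F) = 0"
proof -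
  define D where "D = frechet_derivative f (at F)"
  let ?c = "\<lambda>t. rodrigues_curve A \<sigma> t ** F"
  have "(?c has_derivative (\<lambda>t. (t *\<^sub>R A) ** F)) (at 0)"
    using bounded_linear.has_derivative[OF bounded_linear_matrix_mul_left
        rodrigues_curve_has_derivative[unfolded has_vector_derivative_def]] .
  moreover have "(f has_derivative D) (at (?c 0))"
    using assms(1) by (simp add: D_def frechet_derivative_works)
  ultimately have "((f \<circ> ?c) has_derivative (D \<circ> (\<lambda>t. (t *\<^sub>R A) ** F))) (at 0)"
    by (rule diff_chain_at)
  moreover have "f \<circ> ?c = (\<lambda>t. f F)"
    using invariant rodrigues_curve_orthogonal[OF assms(3,4)] by (simp add: fun_eq_iff)
  ultimately have "D \<circ> (\<lambda>t. (t *\<^sub>R A) ** F) = (\<lambda>_. 0)"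
    using has_derivative_unique has_derivative_const by metis
  then show ?thesis
    by (metis D_def comp_apply scaleR_one)
qed

definition gradient_matrix :: "(real^'m^'n \<Rightarrow> real) \<Rightarrow> real^'m^'n \<Rightarrow> real^'m^'n" where
  "gradient_matrix f F = (\<chi> b a. frechet_derivative f (at F) (axis b (axis a 1)))"

lemma matrix_axis_expansion: "X = (\<Sum>b\<in>UNIV. \<Sum>a\<in>UNIV. X$b$a *\<^sub>R axis b (axis a (1::real)))"
proof -
  have "(\<Sum>a\<in>UNIV. X$b$a * axis b (axis a (1::real)) $ i $ j) = (if b = i then X$i$j else 0)" for b i j
    by (auto simp: axis_def if_distrib cong: if_cong)
  then show ?thesis
    by (simp add: vec_eq_iff sum_component)
qed

lemma frechet_derivative_matrix_expansion:
  assumes "f differentiable (at F)"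
  shows "frechet_derivative f (at F) H = (\<Sum>b\<in>UNIV. \<Sum>a\<in>UNIV. H$b$a * gradient_matrix f F $ b $ a)"
proof -
  have "linear (frechet_derivative f (at F))"
    using assms frechet_derivative_works has_derivative_linear by blast
  then show ?thesis
    by (subst matrix_axis_expansion[of H])
      (simp add: gradient_matrix_def linear_sum linear_scale)
qed

lemma matrix_mul_mul_transpose_nth:
  "(h ** G ** transpose F) $ p $ q = (\<Sum>b\<in>UNIV. \<Sum>a\<in>UNIV. h$p$b * G$b$a * F$q$a)"
  by (simp add: matrix_matrix_mult_def transpose_def sum_distrib_left sum_distrib_right mult.assoc)
    (rule sum.swap)

lemma gradient_moment_symmetric:
  fixes f :: "real^'m^'n \<Rightarrow> real"
  assumes "f differentiable (at F)"
    and "\<And>Q. transpose Q ** g ** Q = g \<Longrightarrow> f (Q ** F) = f F"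
    and "g ** h = mat 1" "h ** g = mat 1" "transpose h = h"
  shows "transpose (h ** gradient_matrix f F ** transpose F) = h ** gradient_matrix f F ** transpose F"
proof -
  let ?G = "gradient_matrix f F"
  have h_sym: "h$i$j = h$j$i" for i j
    using assms(5) by (metis transpose_def vec_lambda_beta)
  have "(h ** ?G ** transpose F) $ p $ q = (h ** ?G ** transpose F) $ q $ p" for p q
  proof -
    have "0 = frechet_derivative f (at F) (h ** skew_unit p q ** F)"
      using frechet_derivative_orthogonal_invariant[OF assms(1,2)
          symmetric_mul_skew_unit_cube[OF assms(5)] transpose_symmetric_mul_skew_unit[OF assms(3-5)]]
      by simp
    also have "\<dots> = (\<Sum>b\<in>UNIV. \<Sum>a\<in>UNIV. (h$b$p * F$q$a - h$b$q * F$p$a) * ?G$b$a)"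
      by (simp add: frechet_derivative_matrix_expansion[OF assms(1)] matrix_mul_skew_unit_mul_nth)
    also have "\<dots> = (h ** ?G ** transpose F) $ p $ q - (h ** ?G ** transpose F) $ q $ p"
      by (simp add: matrix_mul_mul_transpose_nth sum_subtractf[symmetric] algebra_simps h_sym)
    finally show ?thesis by simp
  qed
  then show ?thesis
    by (simp add: vec_eq_iff transpose_def)
qed

lemma metric_mat_1: "metric (mat 1)"
  by (simp add: metric_def inner_gt_zero_iff)

lemma metric_invertible: "metric g \<Longrightarrow> invertible g"
  unfolding metric_def invertible_left_inverse matrix_left_invertible_ker
  by (metis inner_zero_right less_irrefl)

lemma metric_matrix_inv:
  assumes "metric g"
  shows "g ** matrix_inv g = mat 1" "matrix_inv g ** g = mat 1" "transpose (matrix_inv g) = matrix_inv g"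
  using metric_invertible[OF assms] assms
  by (simp_all add: matrix_inv_invertible transpose_matrix_inv_symmetric metric_def)

lemma stressP_eq_gradient:
  "stressP g \<phi> \<psi> F = matrix_inv g ** (\<Sum>i\<in>{1..3}. \<phi> i F *\<^sub>R gradient_matrix (\<psi> i) F)"
  by (simp add: stressP_def matrix_matrix_mult_def sum_component gradient_matrix_def dF_def)

lemma angmom_iff_symmetric: "angmom P F \<longleftrightarrow> transpose (P ** transpose F) = P ** transpose F"
  by (auto simp: angmom_def vec_eq_iff transpose_def matrix_matrix_mult_def)

lemma angmom_stressP_orthogonal_invariant:
  assumes "metric g"
    and "\<And>i. i \<in> {1..3} \<Longrightarrow> \<psi> i differentiable (at F)"
    and "\<And>i Q. i \<in> {1..3} \<Longrightarrow> g_orthogonal g Q \<Longrightarrow> \<psi> i (Q ** F) = \<psi> i F"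
  shows "angmom (stressP g \<phi> \<psi> F) F"
proof -
  let ?M = "\<lambda>i. matrix_inv g ** gradient_matrix (\<psi> i) F ** transpose F"
  have "linear (\<lambda>X. matrix_inv g ** X ** transpose F)"
    by (rule linearI)
      (simp_all add: matrix_add_ldistrib matrix_add_rdistrib matrix_scalar_ac scalar_matrix_assoc)
  then have "stressP g \<phi> \<psi> F ** transpose F = (\<Sum>i\<in>{1..3}. \<phi> i F *\<^sub>R ?M i)"
    unfolding stressP_eq_gradient
    by (subst linear_sum) (simp_all add: matrix_scalar_ac scalar_matrix_assoc)
  moreover have "transpose (?M i) = ?M i" if "i \<in> {1..3}" for i
    using gradient_moment_symmetric[OF assms(2)[OF that] assms(3)[OF that, unfolded g_orthogonal_def]]
      metric_matrix_inv[OF assms(1)] by blast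
  ultimately show ?thesis
    by (simp add: angmom_iff_symmetric linear_sum[OF linear_transpose] linear_scale[OF linear_transpose])
qed

lemma rightCG_orthogonal_invariant:
  assumes "g_orthogonal g Q"
  shows "rightCG g (Q ** F) = rightCG g F"
proof -
  have "rightCG g (Q ** F) = transpose F ** (transpose Q ** g ** Q) ** F"
    by (simp add: rightCG_def matrix_transpose_mul matrix_mul_assoc)
  with assms show ?thesis
    by (simp add: g_orthogonal_def rightCG_def)
qed

lemma has_derivative_rightCG:
  "(rightCG g has_derivative (\<lambda>H. transpose F ** g ** H + transpose H ** g ** F)) (at F)"
proof -
  have "bounded_bilinear (\<lambda>A B :: mat3. transpose A ** g ** B)"
    unfolding bilinear_conv_bounded_bilinear[symmetric] bilinear_def
    by (auto intro!: linearI simp: transpose_add transpose_scalar matrix_add_ldistrib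
        matrix_add_rdistrib matrix_scalar_ac scalar_matrix_assoc)
  from bounded_bilinear.FDERIV[OF this has_derivative_ident has_derivative_ident]
  show ?thesis
    by (simp add: rightCG_def[abs_def])
qed

lemma has_derivative_rightCG_nth:
  "((\<lambda>F'. rightCG g F' $ i $ j) has_derivative
    (\<lambda>H. (transpose F ** g ** H + transpose H ** g ** F) $ i $ j)) (at F)"
  by (intro bounded_linear.has_derivative[OF _ has_derivative_rightCG]
      bounded_linear_compose[OF bounded_linear_vec_nth bounded_linear_vec_nth])

lemma angmom_responseP_rightCG:
  assumes "metric g"
    and "\<forall>i\<in>{1..3}. (\<lambda>F'. \<psi> i X F' G g) differentiable (at F)"
    and "\<forall>i\<in>{1..3}. \<exists>\<psi>'. \<forall>X F G g. \<psi> i X F G g = \<psi>' X (rightCG g F) G g"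
  shows "angmom (responseP \<phi> \<psi> X F G g) F"
  unfolding responseP_def
proof (rule angmom_stressP_orthogonal_invariant[OF assms(1)])
  fix i :: nat and Q
  assume "i \<in> {1..3}"
  then show "(\<lambda>F'. \<psi> i X F' G g) differentiable (at F)"
    using assms(2) by blast
  assume "g_orthogonal g Q"
  with \<open>i \<in> {1..3}\<close> assms(3) show "\<psi> i X (Q ** F) G g = \<psi> i X F G g"
    by (metis rightCG_orthogonal_invariant)
qed

section \<open>A non-objective Ericksen solid\<close>

definition ericksen_phi :: "nat \<Rightarrow> 'x \<Rightarrow> mat3 \<Rightarrow> mat3 \<Rightarrow> mat3 \<Rightarrow> real" where
  "ericksen_phi i X F G g = (if i = 1 then exp (F$1$1) else 0)"

definition ericksen_psi :: "nat \<Rightarrow> 'x \<Rightarrow> mat3 \<Rightarrow> mat3 \<Rightarrow> mat3 \<Rightarrow> real" where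
  "ericksen_psi i X F G g = (if i = 1 then rightCG g F $ 1 $ 1 else 0)"

lemma ericksen_psi_differentiable: "(\<lambda>F'. ericksen_psi i X F' G g) differentiable (at F)"
  using has_derivative_rightCG_nth[of g 1 1 F]
  by (cases "i = 1") (auto simp: ericksen_psi_def differentiable_def)

lemma ericksen_angmom:
  assumes "metric g"
  shows "angmom (responseP ericksen_phi ericksen_psi X F G g) F"
  unfolding responseP_def
  using assms ericksen_psi_differentiable
  by (rule angmom_stressP_orthogonal_invariant)
    (simp add: ericksen_psi_def rightCG_orthogonal_invariant)

lemma ericksen_stress_11:
  "responseP ericksen_phi ericksen_psi X F G (mat 1) $ 1 $ 1 = 2 * exp (F$1$1) * F$1$1"
proof -
  let ?E = "axis 1 (axis 1 1) :: mat3"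
  have "matrix_inv (mat 1 :: mat3) = mat 1"
    using metric_matrix_inv(2)[OF metric_mat_1] by (metis matrix_mul_rid)
  then have "responseP ericksen_phi ericksen_psi X F G (mat 1) $ 1 $ 1 =
      exp (F$1$1) * frechet_derivative (\<lambda>F'. rightCG (mat 1) F' $ 1 $ 1) (at F) ?E"
    by (simp add: responseP_def stressP_eq_gradient gradient_matrix_def ericksen_phi_def
        ericksen_psi_def numeral_3_eq_3)
  also have "frechet_derivative (\<lambda>F'. rightCG (mat 1) F' $ 1 $ 1) (at F) ?E =
      (transpose F ** ?E + transpose ?E ** F) $ 1 $ 1"
    by (simp add: frechet_derivative_at[OF has_derivative_rightCG_nth, symmetric])
  also have "\<dots> = 2 * F$1$1"
  proof -
    have E_nth: "?E $ i $ j = of_bool (i = 1 \<and> j = 1)" for i j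
      by (simp add: axis_def)
    show ?thesis
      unfolding matrix_matrix_mult_def transpose_def vec_lambda_beta E_nth
      by simp
  qed
  finally show ?thesis
    by simp
qed

lemma ericksen_not_objective: "\<not> objective (responseP (ericksen_phi :: nat \<Rightarrow> 'x \<Rightarrow> _) ericksen_psi)"
proof
  let ?P = "responseP (ericksen_phi :: nat \<Rightarrow> 'x \<Rightarrow> _) ericksen_psi undefined"
  assume "objective (responseP (ericksen_phi :: nat \<Rightarrow> 'x \<Rightarrow> _) ericksen_psi)"
  moreover have "g_orthogonal (mat 1) (- mat 1)"
    by (simp add: g_orthogonal_def transpose_minus matrix_mul_minus_left matrix_mul_minus_right)
  ultimately have "?P (- mat 1 ** mat 1) (mat 1) (mat 1) = - mat 1 ** ?P (mat 1) (mat 1) (mat 1)"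
    using metric_mat_1 unfolding objective_def by blast
  then have "?P (- mat 1) (mat 1) (mat 1) $ 1 $ 1 = - (?P (mat 1) (mat 1) (mat 1) $ 1 $ 1)"
    by (simp add: matrix_mul_minus_left)
  then have "exp (- 1) = (exp 1 :: real)"
    unfolding ericksen_stress_11 by (simp add: mat_def)
  then show False
    by simp
qed

theorem mainTheorem2:
  shows "(\<forall>(\<phi> :: nat \<Rightarrow> 'x \<Rightarrow> mat3 \<Rightarrow> mat3 \<Rightarrow> mat3 \<Rightarrow> real) \<psi>.
      (\<forall>i\<in>{1..3}. \<forall>X F G g. metric g \<longrightarrow> (\<lambda>F'. \<psi> i X F' G g) differentiable (at F)) \<and>
      (\<forall>i\<in>{1..3}. \<exists>\<phi>'. \<forall>X F G g. \<phi> i X F G g = \<phi>' X (rightCG g F) G g) \<and>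
      (\<forall>i\<in>{1..3}. \<exists>\<psi>'. \<forall>X F G g. \<psi> i X F G g = \<psi>' X (rightCG g F) G g)
      \<longrightarrow> (\<forall>X F G g. metric g \<longrightarrow> angmom (responseP \<phi> \<psi> X F G g) F))
   \<and>
   (\<exists>(\<phi> :: nat \<Rightarrow> 'x \<Rightarrow> mat3 \<Rightarrow> mat3 \<Rightarrow> mat3 \<Rightarrow> real) \<psi>.
      (\<forall>i\<in>{2,3}. \<phi> i = (\<lambda>X F G g. 0) \<and> \<psi> i = (\<lambda>X F G g. 0)) \<and>
      (\<forall>X F G g. \<phi> 1 X F G g \<noteq> 0) \<and>
      (\<exists>\<psi>'. \<forall>X F G g. \<psi> 1 X F G g = \<psi>' (rightCG g F) G) \<and>
      (\<forall>X F G g. metric g \<longrightarrow> (\<lambda>F'. \<psi> 1 X F' G g) differentiable (at F)) \<and>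
      (\<forall>X F G g. metric g \<longrightarrow> angmom (responseP \<phi> \<psi> X F G g) F) \<and>
      \<not> objective (responseP \<phi> \<psi>))"
proof (rule conjI, goal_cases)
  case 1
  show ?case
    by (intro allI impI) (auto intro!: angmom_responseP_rightCG)
next
  case 2
  show ?case
  proof (rule exI[of _ "ericksen_phi :: nat \<Rightarrow> 'x \<Rightarrow> _"], rule exI[of _ ericksen_psi],
      intro conjI allI impI ericksen_psi_differentiable ericksen_angmom ericksen_not_objective)
    show "\<exists>\<psi>'. \<forall>X F G g. (ericksen_psi :: nat \<Rightarrow> 'x \<Rightarrow> _) 1 X F G g = \<psi>' (rightCG g F) G"
      by (rule exI[of _ "\<lambda>C G. C $ 1 $ 1"]) (simp add: ericksen_psi_def)
  qed (auto simp: ericksen_phi_def ericksen_psi_def fun_eq_iff)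
qed

end
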